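(* Let $M\in\mathbb{R}^{n\times n}$ be a P$_s$-matrix, $q\in\mathbb{R}^n$ and $r\ge2$. Then $$C:=\sup_{x\in\mathcal{L}_s(f_r,f_r(0))}\sigma_{\max}\big(\nabla^2 f_r(x)\big)<+\infty,$$ where for $r=2$, $\nabla^2 f_2(x)$ ranges over all elements of the generalized Hessian $\partial^2 f_2(x)$.
   Context: $f_r(x)=\frac1r\big[\langle x_+^r,(Mx+q)_+^r\rangle+\|x_-\|_r^r+\|(Mx+q)_-\|_r^r\big]$ with $a_+=\max\{a,0\}$, $a_-=\min\{a,0\}$ componentwise, $x_+^r$ the componentwise $r$th power of $x_+$, $\|z\|_r^r=\sum_i|z_i|^r$; $f_r$ is $C^2$ for $r>2$ and $C^1$ for $r=2$, in which case $\partial^2 f_2(x)$ denotes the Clarke generalized Jacobian of $\nabla f_2$ at $x$. $\mathcal{L}_s(f_r,\gamma)=\{x\in\mathbb{R}^n:\|x\|_0\le s,\ f_r(x)\le\gamma\}$, with $\|x\|_0$ the number of nonzero entries. $\sigma_{\max}(A)$ is the largest singular value of $A$. A P$_s$-matrix is a square matrix all of whose principal minors of order up to $s$ are positive. *)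

theory Defs
  imports "HOL-Analysis.Analysis"
begin

definition fr :: "real \<Rightarrow> real^'n^'n \<Rightarrow> real^'n \<Rightarrow> real^'n \<Rightarrow> real" where
  "fr r M q x = (1 / r) *
     ((\<Sum>i\<in>UNIV. (max (x$i) 0) powr r * (max ((M *v x + q)$i) 0) powr r)
      + (\<Sum>i\<in>UNIV. \<bar>min (x$i) 0\<bar> powr r)
      + (\<Sum>i\<in>UNIV. \<bar>min ((M *v x + q)$i) 0\<bar> powr r))"

definition l0 :: "real^'n \<Rightarrow> nat" where
  "l0 x = card {i. x$i \<noteq> 0}"

definition level_set :: "nat \<Rightarrow> (real^'n \<Rightarrow> real) \<Rightarrow> real \<Rightarrow> (real^'n) set" where
  "level_set s f \<gamma> = {x. l0 x \<le> s \<and> f x \<le> \<gamma>}"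

definition principal_minor :: "real^'n^'n \<Rightarrow> 'n set \<Rightarrow> real" where
  "principal_minor A I = (\<Sum>p\<in>{p. p permutes I}. of_int (sign p) * (\<Prod>i\<in>I. A$i$(p i)))"

definition P_s_matrix :: "nat \<Rightarrow> real^'n^'n \<Rightarrow> bool" where
  "P_s_matrix s A \<longleftrightarrow> (\<forall>I. I \<noteq> {} \<and> card I \<le> s \<longrightarrow> principal_minor A I > 0)"

definition sigma_max :: "real^'n^'m \<Rightarrow> real" where
  "sigma_max A = Sup {sqrt \<mu> | \<mu>. \<exists>v. v \<noteq> 0 \<and> (transpose A ** A) *v v = \<mu> *\<^sub>R v}"

definition grad :: "(real^'n \<Rightarrow> real) \<Rightarrow> real^'n \<Rightarrow> real^'n" where
  "grad f x = (\<chi> i. frechet_derivative f (at x) (axis i 1))"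

definition jacobian :: "(real^'n \<Rightarrow> real^'m) \<Rightarrow> real^'n \<Rightarrow> real^'n^'m" where
  "jacobian g x = matrix (frechet_derivative g (at x))"

definition hessian :: "(real^'n \<Rightarrow> real) \<Rightarrow> real^'n \<Rightarrow> real^'n^'n" where
  "hessian f x = jacobian (grad f) x"

definition clarke_jacobian :: "(real^'n \<Rightarrow> real^'m) \<Rightarrow> real^'n \<Rightarrow> (real^'n^'m) set" where
  "clarke_jacobian g x = convex hull
     {A. \<exists>y. (\<forall>k. g differentiable (at (y k))) \<and> y \<longlonglongrightarrow> x
            \<and> (\<lambda>k. jacobian g (y k)) \<longlonglongrightarrow> A}"

definition hess_set :: "real \<Rightarrow> real^'n^'n \<Rightarrow> real^'n \<Rightarrow> real^'n \<Rightarrow> (real^'n^'n) set" where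
  "hess_set r M q x = (if r = 2 then clarke_jacobian (grad (fr r M q)) x
                       else {hessian (fr r M q) x})"

end

theory Submission
  imports Defs
begin

text \<open>
  If the sparse level set were unbounded, the normalised points of an escaping sequence in it
  would accumulate at an s-sparse unit vector d with d \<ge> 0, M d \<ge> 0 and d complementary to
  M d. Then M d vanishes on the support I of d, so the principal minor of M on I is zero,
  contradicting the P_s property; hence the level set lies in a ball. For r \<ge> 2 the gradient
  of f_r is built from the maps t \<mapsto> (max t 0) powr a with a \<ge> 1 and affine maps by sums and
  products, so it is Lipschitz on that ball. A Jacobian of a map that is L-Lipschitz near the
  point has operator norm at most L; this bound is closed and convex in the matrix, so it
  passes to the Clarke generalized Jacobian, and it bounds the largest singular value.
\<close>

section \<open>Principal minors\<close>

definition principal_block :: "real^'n^'n \<Rightarrow> 'n set \<Rightarrow> real^'n^'n" where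
  "principal_block A I = (\<chi> i j. if i \<in> I \<and> j \<in> I then A$i$j else if i = j then 1 else 0)"

lemma principal_minor_eq_det: "principal_minor A I = det (principal_block A I)"
proof -
  let ?B = "principal_block A I"
  let ?g = "\<lambda>p. of_int (sign p) * (\<Prod>i\<in>UNIV. ?B$i$p i)"
  have "?g p = 0" if p: "p permutes UNIV" and np: "\<not> p permutes I" for p
  proof -
    obtain i where "i \<notin> I" "p i \<noteq> i"
      using permutes_superset[OF p] np by blast
    then have "?B$i$p i = 0" by (simp add: principal_block_def)
    then have "(\<Prod>i\<in>UNIV. ?B$i$p i) = 0" by (meson UNIV_I finite prod_zero)
    then show ?thesis by simp
  qed
  moreover have "?g p = of_int (sign p) * (\<Prod>i\<in>I. A$i$p i)" if p: "p permutes I" for p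
  proof -
    have "(\<Prod>i\<in>UNIV. ?B$i$p i) = (\<Prod>i\<in>I. ?B$i$p i) * (\<Prod>i\<in>UNIV - I. ?B$i$p i)"
      by (simp add: prod.subset_diff[of I UNIV] mult.commute)
    also have "(\<Prod>i\<in>UNIV - I. ?B$i$p i) = 1"
      using p by (intro prod.neutral) (simp add: principal_block_def permutes_not_in)
    also have "(\<Prod>i\<in>I. ?B$i$p i) = (\<Prod>i\<in>I. A$i$p i)"
      using p by (intro prod.cong) (simp_all add: principal_block_def permutes_in_image)
    finally show ?thesis by simp
  qed
  moreover have "{p. p permutes I} \<subseteq> {p. p permutes UNIV}"
    using permutes_subset by blast
  ultimately have "sum ?g {p. p permutes UNIV} = principal_minor A I"
    unfolding principal_minor_def
    by (subst sum.mono_neutral_right[of _ "{p. p permutes I}"]) (auto intro!: sum.cong)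
  then show ?thesis
    unfolding det_def by simp
qed

lemma principal_minor_eq_0:
  assumes "d \<noteq> 0" "\<And>i. i \<notin> I \<Longrightarrow> d$i = 0" "\<And>i. i \<in> I \<Longrightarrow> (A *v d)$i = 0"
  shows "principal_minor A I = 0"
proof -
  have "(principal_block A I *v d)$i = (if i \<in> I then (A *v d)$i else d$i)" for i
  proof (cases "i \<in> I")
    case True
    then show ?thesis
      by (auto simp: principal_block_def matrix_vector_mult_def assms(2) intro!: sum.cong)
  next
    case False
    have "(\<Sum>j\<in>UNIV. (if i = j then 1 else 0) * d$j) = (\<Sum>j\<in>UNIV. if i = j then d$j else 0)"
      by (rule sum.cong) auto
    with False show ?thesis
      by (simp add: principal_block_def matrix_vector_mult_def)
  qed
  then have "principal_block A I *v d = 0"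
    using assms(2,3) by (simp add: vec_eq_iff)
  then have "\<not> invertible (principal_block A I)"
    using assms(1) matrix_left_invertible_ker unfolding invertible_left_inverse by blast
  then show ?thesis
    by (simp add: principal_minor_eq_det invertible_det_nz)
qed

lemma P_s_matrix_complementary_eq_0:
  assumes "P_s_matrix s A" "l0 d \<le> s" "\<And>i. d$i * (A *v d)$i = 0"
  shows "d = 0"
proof (rule ccontr)
  assume "d \<noteq> 0"
  define I where "I = {i. d$i \<noteq> 0}"
  have "principal_minor A I = 0"
    using \<open>d \<noteq> 0\<close> assms(3) by (intro principal_minor_eq_0) (auto simp: I_def)
  moreover have "I \<noteq> {}"
    using \<open>d \<noteq> 0\<close> by (auto simp: I_def vec_eq_iff)
  moreover have "card I \<le> s"
    using assms(2) by (simp add: I_def l0_def)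
  ultimately show False
    using assms(1) by (auto simp: P_s_matrix_def)
qed

section \<open>Positive-part powers\<close>

definition pos_powr :: "real \<Rightarrow> real \<Rightarrow> real" where
  "pos_powr a t = (max t 0) powr a"

lemma pos_powr_nonneg: "0 \<le> pos_powr a t"
  by (simp add: pos_powr_def)

lemma max_le_if_pos_powr_le:
  assumes "a > 0" "pos_powr a t \<le> C"
  shows "max t 0 \<le> (max C 0) powr (1/a)"
proof -
  have "max t 0 = (pos_powr a t) powr (1/a)"
    using assms(1) by (simp add: pos_powr_def powr_powr)
  also have "\<dots> \<le> (max C 0) powr (1/a)"
    using assms by (intro powr_mono2) (auto simp: pos_powr_nonneg)
  finally show ?thesis .
qed

lemma has_real_derivative_pos_powr:
  assumes a: "a > 1"
  shows "(pos_powr a has_real_derivative a * pos_powr (a - 1) t) (at t)"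
proof -
  consider "t > 0" | "t < 0" | "t = 0"
    by fastforce
  then show ?thesis
  proof cases
    case 1
    have "((\<lambda>z. z powr a) has_real_derivative a * pos_powr (a - 1) t) (at t)"
      using has_real_derivative_powr[OF 1] 1 by (simp add: pos_powr_def)
    then show ?thesis
      by (rule has_field_derivative_transform_within_open[where S="{0<..}"])
        (use 1 in \<open>auto simp: pos_powr_def\<close>)
  next
    case 2
    have "((\<lambda>z. 0) has_real_derivative a * pos_powr (a - 1) t) (at t)"
      using 2 by (simp add: pos_powr_def)
    then show ?thesis
      by (rule has_field_derivative_transform_within_open[where S="{..<0}"])
        (use 2 in \<open>auto simp: pos_powr_def\<close>)
  next
    case 3
    have zero: "pos_powr a 0 = 0"
      by (simp add: pos_powr_def)
    have bound: "\<bar>pos_powr a y / y\<bar> \<le> \<bar>y\<bar> powr (a - 1)" for y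
    proof (cases "y > 0")
      case False
      then have "pos_powr a y = 0"
        by (simp add: pos_powr_def max_def)
      then show ?thesis
        by simp
    qed (simp add: pos_powr_def powr_diff)
    have "((\<lambda>y. \<bar>y\<bar> powr (a - 1)) \<longlongrightarrow> 0) (at 0)"
      using a by (intro tendsto_zero_powrI[where b="a - 1"]) (auto intro!: tendsto_eq_intros)
    then have "((\<lambda>y. (pos_powr a y - pos_powr a 0) / (y - 0)) \<longlongrightarrow> 0) (at 0)"
      by (rule Lim_null_comparison[OF always_eventually, rotated]) (use bound in \<open>simp add: zero\<close>)
    then show ?thesis
      using 3 by (simp add: has_field_derivative_iff pos_powr_def)
  qed
qed

lemma lipschitz_on_powr:
  assumes a: "1 \<le> a" and B: "0 \<le> B"
  shows "(a * B powr (a - 1))-lipschitz_on {0..B} (\<lambda>t. t powr a)"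
proof (rule lipschitz_on_leI)
  fix u v :: real
  assume uv: "u \<in> {0..B}" "v \<in> {0..B}" "u \<le> v"
  show "dist (u powr a) (v powr a) \<le> a * B powr (a - 1) * dist u v"
  proof (cases "u = v")
    case False
    have "continuous_on {u..v} (\<lambda>t. t powr a)"
      using uv a by (intro continuous_on_powr'[OF continuous_on_id continuous_on_const]) auto
    moreover have "(\<lambda>t. t powr a) differentiable (at t)" if "u < t" for t
      using uv that has_real_derivative_powr[of t a] by (auto simp: real_differentiable_def)
    ultimately obtain l z where z: "u < z" "z < v" and l: "DERIV (\<lambda>t. t powr a) z :> l"
      and mvt: "v powr a - u powr a = (v - u) * l"
      using MVT[of u v] uv False by (meson order_le_neq_trans)
    have "l = a * z powr (a - 1)"
      using z uv by (intro DERIV_unique[OF l] has_real_derivative_powr) auto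
    also have "\<dots> \<le> a * B powr (a - 1)"
      using z uv a by (intro mult_left_mono powr_mono2) auto
    finally have "v powr a - u powr a \<le> (v - u) * (a * B powr (a - 1))"
      using mvt uv by (simp add: mult_left_mono)
    moreover have "u powr a \<le> v powr a"
      using uv a by (intro powr_mono2) auto
    ultimately show ?thesis
      using uv by (simp add: dist_real_def algebra_simps)
  qed simp
qed (use a B in simp)

lemma lipschitz_on_pos_powr:
  assumes a: "1 \<le> a" and B: "0 \<le> B"
  shows "(a * B powr (a - 1))-lipschitz_on {-B..B} (pos_powr a)"
proof -
  have max_lip: "1-lipschitz_on {-B..B} (\<lambda>t::real. max t 0)"
    by (rule lipschitz_onI) (auto simp: dist_real_def max_def)
  have "(\<lambda>t::real. max t 0) ` {-B..B} \<subseteq> {0..B}"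
    by auto
  from lipschitz_on_compose2[OF max_lip lipschitz_on_subset[OF lipschitz_on_powr[OF a B] this]]
  have "(a * B powr (a - 1) * 1)-lipschitz_on {-B..B} (\<lambda>t. (max t 0) powr a)" .
  then show ?thesis
    by (simp add: pos_powr_def[abs_def])
qed

section \<open>Lipschitz functions on compact sets\<close>

lemma lipschitz_on_mult:
  fixes f g :: "'a::metric_space \<Rightarrow> real"
  assumes f: "C-lipschitz_on S f" "\<And>x. x \<in> S \<Longrightarrow> \<bar>f x\<bar> \<le> A"
    and g: "D-lipschitz_on S g" "\<And>x. x \<in> S \<Longrightarrow> \<bar>g x\<bar> \<le> B"
    and AB: "0 \<le> A" "0 \<le> B"
  shows "(A * D + B * C)-lipschitz_on S (\<lambda>x. f x * g x)"
proof (rule lipschitz_onI)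
  fix x y assume xy: "x \<in> S" "y \<in> S"
  have "f x * g x - f y * g y = f x * (g x - g y) + g y * (f x - f y)"
    by (simp add: algebra_simps)
  then have "dist (f x * g x) (f y * g y) \<le> \<bar>f x\<bar> * dist (g x) (g y) + \<bar>g y\<bar> * dist (f x) (f y)"
    by (metis abs_mult abs_triangle_ineq dist_real_def)
  also have "\<dots> \<le> A * (D * dist x y) + B * (C * dist x y)"
    using xy f g AB by (intro add_mono mult_mono lipschitz_onD[where X=S]) auto
  finally show "dist (f x * g x) (f y * g y) \<le> (A * D + B * C) * dist x y"
    by (simp add: algebra_simps)
qed (use lipschitz_on_nonneg[OF f(1)] lipschitz_on_nonneg[OF g(1)] AB in simp)

definition lipschitz :: "'a::metric_space set \<Rightarrow> ('a \<Rightarrow> 'b::metric_space) \<Rightarrow> bool" where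
  "lipschitz S f \<longleftrightarrow> (\<exists>L. L-lipschitz_on S f)"

lemma lipschitz_const: "lipschitz S (\<lambda>x. c)"
  using lipschitz_on_constant unfolding lipschitz_def by blast

lemma lipschitz_add:
  fixes f g :: "'a::metric_space \<Rightarrow> 'b::real_normed_vector"
  shows "lipschitz S f \<Longrightarrow> lipschitz S g \<Longrightarrow> lipschitz S (\<lambda>x. f x + g x)"
  unfolding lipschitz_def by (blast intro: lipschitz_on_add)

lemma lipschitz_minus:
  fixes f :: "'a::metric_space \<Rightarrow> 'b::real_normed_vector"
  shows "lipschitz S f \<Longrightarrow> lipschitz S (\<lambda>x. - f x)"
  unfolding lipschitz_def by (blast intro: lipschitz_on_minus)

lemma lipschitz_diff:
  fixes f g :: "'a::metric_space \<Rightarrow> 'b::real_normed_vector"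
  shows "lipschitz S f \<Longrightarrow> lipschitz S g \<Longrightarrow> lipschitz S (\<lambda>x. f x - g x)"
  unfolding lipschitz_def by (blast intro: lipschitz_on_diff)

lemma lipschitz_sum:
  fixes f :: "'i \<Rightarrow> 'a::metric_space \<Rightarrow> 'b::real_normed_vector"
  shows "(\<And>i. i \<in> I \<Longrightarrow> lipschitz S (f i)) \<Longrightarrow> lipschitz S (\<lambda>x. \<Sum>i\<in>I. f i x)"
  by (induction I rule: infinite_finite_induct) (auto intro: lipschitz_const lipschitz_add)

lemma lipschitz_bounded_linear:
  fixes f :: "'a::real_normed_vector \<Rightarrow> 'b::real_normed_vector"
  assumes "bounded_linear f"
  shows "lipschitz S (\<lambda>x. f x + c)"
proof -
  obtain L where "L-lipschitz_on S f"
    using bounded_linear.lipschitz_boundE[OF assms] .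
  then show ?thesis
    unfolding lipschitz_def using lipschitz_on_add[OF _ lipschitz_on_constant] by blast
qed

lemma lipschitz_on_compact_abs_bounded:
  fixes f :: "'a::metric_space \<Rightarrow> real"
  assumes "compact S" "lipschitz S f"
  obtains B where "0 \<le> B" "\<And>x. x \<in> S \<Longrightarrow> \<bar>f x\<bar> \<le> B"
proof -
  have "compact (f ` S)"
    using assms lipschitz_on_continuous_on unfolding lipschitz_def
    by (blast intro: compact_continuous_image)
  then obtain B where "B > 0" "\<And>y. y \<in> f ` S \<Longrightarrow> norm y \<le> B"
    using compact_imp_bounded bounded_pos by metis
  then show thesis
    by (intro that[of B]) auto
qed

lemma lipschitz_mult:
  fixes f g :: "'a::metric_space \<Rightarrow> real"
  assumes "compact S" "lipschitz S f" "lipschitz S g"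
  shows "lipschitz S (\<lambda>x. f x * g x)"
proof -
  obtain A B where "0 \<le> A" "\<And>x. x \<in> S \<Longrightarrow> \<bar>f x\<bar> \<le> A"
    and "0 \<le> B" "\<And>x. x \<in> S \<Longrightarrow> \<bar>g x\<bar> \<le> B"
    using lipschitz_on_compact_abs_bounded[OF assms(1,2)] lipschitz_on_compact_abs_bounded[OF assms(1,3)] by metis
  moreover obtain C D where "C-lipschitz_on S f" "D-lipschitz_on S g"
    using assms(2,3) unfolding lipschitz_def by blast
  ultimately show ?thesis
    unfolding lipschitz_def using lipschitz_on_mult by blast
qed

lemma lipschitz_pos_powr:
  fixes f :: "'a::metric_space \<Rightarrow> real"
  assumes "compact S" "lipschitz S f" "1 \<le> a"
  shows "lipschitz S (\<lambda>x. pos_powr a (f x))"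
proof -
  obtain B where B: "0 \<le> B" "\<And>x. x \<in> S \<Longrightarrow> \<bar>f x\<bar> \<le> B"
    using lipschitz_on_compact_abs_bounded[OF assms(1,2)] by blast
  obtain C where "C-lipschitz_on S f"
    using assms(2) unfolding lipschitz_def by blast
  moreover have "(a * B powr (a - 1))-lipschitz_on (f ` S) (pos_powr a)"
    using B by (intro lipschitz_on_subset[OF lipschitz_on_pos_powr[OF assms(3) B(1)]]) force
  ultimately show ?thesis
    unfolding lipschitz_def by (blast intro: lipschitz_on_compose2)
qed

lemma lipschitz_componentwise:
  fixes f :: "'a::metric_space \<Rightarrow> real^'n"
  assumes "\<And>j. lipschitz S (\<lambda>x. f x $ j)"
  shows "lipschitz S f"
proof -
  obtain L where L: "\<And>j. (L j)-lipschitz_on S (\<lambda>x. f x $ j)"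
    using assms unfolding lipschitz_def by metis
  have "dist (f x) (f y) \<le> (\<Sum>j\<in>UNIV. L j) * dist x y" if "x \<in> S" "y \<in> S" for x y
  proof -
    have "dist (f x) (f y) \<le> (\<Sum>j\<in>UNIV. dist (f x $ j) (f y $ j))"
      using norm_le_l1_cart[of "f x - f y"] by (simp add: dist_norm)
    also have "\<dots> \<le> (\<Sum>j\<in>UNIV. L j * dist x y)"
      using L that by (intro sum_mono lipschitz_onD)
    finally show ?thesis
      by (simp add: sum_distrib_right)
  qed
  moreover have "0 \<le> (\<Sum>j\<in>UNIV. L j)"
    using L lipschitz_on_nonneg by (blast intro: sum_nonneg)
  ultimately show ?thesis
    unfolding lipschitz_def by (blast intro: lipschitz_onI)
qed

section \<open>Jacobians of Lipschitz maps\<close>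

definition opnorm_cball :: "real \<Rightarrow> (real^'n^'m) set" where
  "opnorm_cball L = {A. \<forall>h. norm (A *v h) \<le> L * norm h}"

lemma linear_matrix_vector_mult_left: "linear (\<lambda>A::real^'n^'m. A *v h)"
  by (rule linearI) (simp_all add: matrix_vector_mult_add_rdistrib scaleR_matrix_vector_assoc)

lemma opnorm_cball_eq_INT: "opnorm_cball L = (\<Inter>h. (\<lambda>A. A *v h) -` cball 0 (L * norm h))"
  by (auto simp: opnorm_cball_def)

lemma closed_opnorm_cball: "closed (opnorm_cball L)"
  unfolding opnorm_cball_eq_INT
  by (intro closed_INT ballI continuous_closed_vimage closed_cball linear_continuous_at
      linear_matrix_vector_mult_left[unfolded linear_conv_bounded_linear])

lemma convex_opnorm_cball: "convex (opnorm_cball L)"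
  unfolding opnorm_cball_eq_INT
  by (intro convex_INT convex_linear_vimage linear_matrix_vector_mult_left convex_cball)

lemma jacobian_in_opnorm_cball:
  fixes G :: "real^'n \<Rightarrow> real^'m"
  assumes "G differentiable (at y)" and e: "0 < e" and lip: "L-lipschitz_on (ball y e) G"
  shows "jacobian G y \<in> opnorm_cball L"
proof -
  define G' where "G' = frechet_derivative G (at y)"
  have G': "(G has_derivative G') (at y)"
    using assms(1) frechet_derivative_works unfolding G'_def by blast
  have bl: "bounded_linear G'"
    using G' by (rule has_derivative_bounded_linear)
  have "norm (G' h) \<le> L * norm h" for h
  proof (rule ccontr)
    assume "\<not> ?thesis"
    then have gap: "L * norm h < norm (G' h)"
      by simp
    then have h: "0 < norm h"
      using bl by (auto simp: linear_simps)
    define \<epsilon> where "\<epsilon> = (norm (G' h) - L * norm h) / (2 * norm h)"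
    have "0 < \<epsilon>"
      using gap h by (simp add: \<epsilon>_def)
    then obtain d where d: "0 < d"
      and approx: "\<And>z. norm (z - y) < d \<Longrightarrow> norm (G z - G y - G' (z - y)) \<le> \<epsilon> * norm (z - y)"
      using G' unfolding has_derivative_at_alt by blast
    define t where "t = min d e / (2 * norm h)"
    have t: "0 < t" "t * norm h < d" "t * norm h < e"
      using d e h by (auto simp: t_def min_def field_simps)
    define z where "z = y + t *\<^sub>R h"
    have z: "norm (z - y) = t * norm h" "z \<in> ball y e" "y \<in> ball y e"
      using t e by (simp_all add: z_def dist_norm)
    have "t * norm (G' h) = norm (G' (z - y))"
      using t bl by (simp add: z_def linear_simps)
    also have "\<dots> \<le> norm (G z - G y) + norm (G z - G y - G' (z - y))"
      using norm_triangle_sub[of "G' (z - y)" "G z - G y"] by (simp add: norm_minus_commute)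
    also have "\<dots> \<le> L * (t * norm h) + \<epsilon> * (t * norm h)"
      using lipschitz_on_normD[OF lip z(2,3)] approx[of z] z(1) t(2) by (intro add_mono) auto
    finally have "t * norm (G' h) \<le> t * (L * norm h + \<epsilon> * norm h)"
      by (simp add: algebra_simps)
    then have "norm (G' h) \<le> L * norm h + \<epsilon> * norm h"
      using t(1) by simp
    then show False
      using gap h by (simp add: \<epsilon>_def field_simps)
  qed
  moreover have "jacobian G y *v h = G' h" for h
    unfolding jacobian_def G'_def[symmetric] using bl by (simp add: matrix_works bounded_linear.linear)
  ultimately show ?thesis
    by (simp add: opnorm_cball_def)
qed

lemma clarke_jacobian_subset_opnorm_cball:
  fixes G :: "real^'n \<Rightarrow> real^'m"
  assumes e: "0 < e" and lip: "L-lipschitz_on (ball x e) G"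
  shows "clarke_jacobian G x \<subseteq> opnorm_cball L"
  unfolding clarke_jacobian_def
proof (rule hull_minimal[where S=convex, OF subsetI convex_opnorm_cball])
  fix A
  assume "A \<in> {A. \<exists>y. (\<forall>k. G differentiable (at (y k))) \<and> y \<longlonglongrightarrow> x
                  \<and> (\<lambda>k. jacobian G (y k)) \<longlonglongrightarrow> A}"
  then obtain y where dG: "\<And>k. G differentiable (at (y k))" and y: "y \<longlonglongrightarrow> x"
    and A: "(\<lambda>k. jacobian G (y k)) \<longlonglongrightarrow> A"
    by blast
  have "\<forall>\<^sub>F k in sequentially. y k \<in> ball x (e/2)"
    using y e by (intro topological_tendstoD) auto
  moreover have "jacobian G (y k) \<in> opnorm_cball L" if "y k \<in> ball x (e/2)" for k
  proof (rule jacobian_in_opnorm_cball[OF dG])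
    show "0 < e/2"
      using e by simp
    have "ball (y k) (e/2) \<subseteq> ball x e"
    proof
      fix z
      assume "z \<in> ball (y k) (e/2)"
      then show "z \<in> ball x e"
        using that dist_triangle[of x z "y k"] by simp
    qed
    then show "L-lipschitz_on (ball (y k) (e/2)) G"
      using lipschitz_on_subset[OF lip] by blast
  qed
  ultimately show "A \<in> opnorm_cball L"
    by (intro Lim_in_closed_set[OF closed_opnorm_cball _ trivial_limit_sequentially A])
      (auto elim: eventually_mono)
qed

text \<open>\<open>Sup {}\<close> is the value of \<^const>\<open>sigma_max\<close> should \<open>transpose A ** A\<close> have no
  eigenvector; the maximum spares us proving that it always has one.\<close>

lemma sigma_max_le_if_in_opnorm_cball:
  fixes A :: "real^'n^'m"
  assumes A: "A \<in> opnorm_cball L" and L: "0 \<le> L"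
  shows "sigma_max A \<le> max L (Sup {})"
proof (cases "{sqrt \<mu> | \<mu>. \<exists>v. v \<noteq> 0 \<and> (transpose A ** A) *v v = \<mu> *\<^sub>R v} = {}")
  case True
  then show ?thesis
    unfolding sigma_max_def by (subst True) simp
next
  case False
  have "sigma_max A \<le> L"
    unfolding sigma_max_def
  proof (rule cSup_least[OF False])
    fix s
    assume "s \<in> {sqrt \<mu> | \<mu>. \<exists>v. v \<noteq> 0 \<and> (transpose A ** A) *v v = \<mu> *\<^sub>R v}"
    then obtain \<mu> v where s: "s = sqrt \<mu>" and v: "v \<noteq> 0"
      and eigen: "(transpose A ** A) *v v = \<mu> *\<^sub>R v"
      by blast
    have "\<mu> * (norm v)\<^sup>2 = v \<bullet> ((transpose A ** A) *v v)"
      by (simp add: eigen power2_norm_eq_inner)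
    also have "\<dots> = v \<bullet> (transpose A *v (A *v v))"
      by (simp add: matrix_vector_mul_assoc)
    also have "\<dots> = (A *v v) \<bullet> (A *v v)"
      by (metis dot_lmul_matrix vector_transpose_matrix)
    also have "\<dots> = (norm (A *v v))\<^sup>2"
      by (simp add: power2_norm_eq_inner)
    also have "\<dots> \<le> (L * norm v)\<^sup>2"
      using A by (intro power_mono) (auto simp: opnorm_cball_def)
    finally have "\<mu> \<le> L\<^sup>2"
      using v by (simp add: power_mult_distrib)
    then show "s \<le> L"
      using s L real_sqrt_le_mono by fastforce
  qed
  then show ?thesis
    by simp
qed

text \<open>Where the gradient is not differentiable, \<^const>\<open>frechet_derivative\<close> is a choice from an
  empty set, so the Hessian there is one and the same junk matrix. This is how the case \<open>r > 2\<close>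
  is settled without proving that \<^const>\<open>fr\<close> is twice differentiable.\<close>

lemma jacobian_if_not_differentiable:
  assumes "\<not> G differentiable (at x)"
  shows "jacobian G x = matrix (SOME f'. False)"
proof -
  have "(\<lambda>f'. (G has_derivative f') (at x)) = (\<lambda>f'. False)"
    using assms unfolding differentiable_def by blast
  then show ?thesis
    unfolding jacobian_def frechet_derivative_def by simp
qed

section \<open>The merit function\<close>

lemma fr_eq_pos_powr:
  "fr r M q x = (1 / r) * ((\<Sum>i\<in>UNIV. pos_powr r (x$i) * pos_powr r ((M *v x + q)$i))
      + (\<Sum>i\<in>UNIV. pos_powr r (- x$i)) + (\<Sum>i\<in>UNIV. pos_powr r (- (M *v x + q)$i)))"
proof -
  have "\<bar>min t 0\<bar> = max (- t) (0::real)" for t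
    by (simp add: min_def max_def)
  then show ?thesis
    unfolding fr_def pos_powr_def by simp
qed

lemma fr_le_imp_bounds:
  assumes r: "r > 0" and x: "fr r M q x \<le> c"
  defines "K \<equiv> (max (r * c) 0) powr (1/r)"
  shows "- x$i \<le> K" "- (M *v x + q)$i \<le> K"
    "max (x$i) 0 * max ((M *v x + q)$i) 0 \<le> K"
proof -
  let ?y = "M *v x + q"
  let ?A = "\<Sum>i\<in>UNIV. pos_powr r (x$i) * pos_powr r (?y$i)"
  let ?B = "\<Sum>i\<in>UNIV. pos_powr r (- x$i)"
  let ?C = "\<Sum>i\<in>UNIV. pos_powr r (- ?y$i)"
  have "?A + ?B + ?C \<le> r * c"
    using x r by (simp add: fr_eq_pos_powr field_simps)
  moreover have "pos_powr r (x$i) * pos_powr r (?y$i) \<le> ?A" "pos_powr r (- x$i) \<le> ?B"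
    "pos_powr r (- ?y$i) \<le> ?C" "0 \<le> ?A" "0 \<le> ?B" "0 \<le> ?C"
    by (auto intro!: member_le_sum sum_nonneg mult_nonneg_nonneg pos_powr_nonneg)
  moreover have "pos_powr r (x$i) * pos_powr r (?y$i) = pos_powr r (max (x$i) 0 * max (?y$i) 0)"
    by (simp add: pos_powr_def powr_mult)
  ultimately have "pos_powr r (- x$i) \<le> r * c" "pos_powr r (- ?y$i) \<le> r * c"
    "pos_powr r (max (x$i) 0 * max (?y$i) 0) \<le> r * c"
    by linarith+
  then show "- x$i \<le> K" "- ?y$i \<le> K" "max (x$i) 0 * max (?y$i) 0 \<le> K"
    using max_le_if_pos_powr_le[OF r] unfolding K_def by fastforce+
qed

lemma fr_le_imp_scaled_bounds:
  fixes M :: "real^'n^'n"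
  assumes r: "r > 0" and x: "fr r M q x \<le> c" and t: "0 \<le> t"
  defines "K \<equiv> (max (r * c) 0) powr (1/r)" and "u \<equiv> t *\<^sub>R x"
  shows "- u$i \<le> t * K" "- (M *v u + t *\<^sub>R q)$i \<le> t * K"
    "max (u$i) 0 * max ((M *v u + t *\<^sub>R q)$i) 0 \<le> t\<^sup>2 * K"
proof -
  note bounds = fr_le_imp_bounds[OF r x, folded K_def]
  have y: "M *v u + t *\<^sub>R q = t *\<^sub>R (M *v x + q)"
    by (simp add: u_def matrix_vector_mult_scaleR scaleR_add_right)
  have u_nth: "u$i = t * x$i"
    by (simp add: u_def)
  have max_scale: "max (t * v) 0 = t * max v 0" for v
    using t by (simp add: max_def mult_le_0_iff)
  show "- u$i \<le> t * K"
    using mult_left_mono[OF bounds(1) t] by (simp add: u_nth)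
  show "- (M *v u + t *\<^sub>R q)$i \<le> t * K"
    using mult_left_mono[OF bounds(2) t]
    by (simp only: y vector_scaleR_component real_scaleR_def mult_minus_right)
  have "max (u$i) 0 * max ((M *v u + t *\<^sub>R q)$i) 0
      = t\<^sup>2 * (max (x$i) 0 * max ((M *v x + q)$i) 0)"
    by (simp only: y u_nth vector_scaleR_component real_scaleR_def max_scale)
      (simp add: power2_eq_square)
  then show "max (u$i) 0 * max ((M *v u + t *\<^sub>R q)$i) 0 \<le> t\<^sup>2 * K"
    using mult_left_mono[OF bounds(3) zero_le_power2[of t]] by simp
qed

lemma eventually_l0_le:
  assumes "(x \<longlongrightarrow> d) F"
  shows "\<forall>\<^sub>F k in F. l0 d \<le> l0 (x k)"
proof -
  have "\<forall>\<^sub>F k in F. \<forall>i. d$i \<noteq> 0 \<longrightarrow> x k $ i \<noteq> 0"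
    using tendsto_imp_eventually_ne[OF tendsto_vec_nth[OF assms]]
    by (intro eventually_all_finite) (auto intro: eventually_mono)
  then show ?thesis
    unfolding l0_def by eventually_elim (auto intro!: card_mono)
qed

lemma level_set_recession_direction:
  fixes M :: "real^'n^'n"
  assumes r: "r > 0" and X: "\<And>k. X k \<in> level_set s (fr r M q) c"
    and X_inf: "filterlim (\<lambda>k. norm (X k)) at_top sequentially"
    and d: "(\<lambda>k. X k /\<^sub>R norm (X k)) \<longlonglongrightarrow> d"
  shows "l0 d \<le> s" "d$i * (M *v d)$i = 0"
proof -
  define K where "K = (max (r * c) 0) powr (1/r)"
  define t where "t k = inverse (norm (X k))" for k
  have fX: "fr r M q (X k) \<le> c" "l0 (X k) \<le> s" for k
    using X[of k] by (simp_all add: level_set_def)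
  have t: "t \<longlonglongrightarrow> 0"
    unfolding t_def using X_inf by (rule tendsto_inverse_0_at_top)
  have t_nonneg: "0 \<le> t k" for k
    by (simp add: t_def)
  have scaled: "- (t k *\<^sub>R X k)$i \<le> t k * K" "- (M *v (t k *\<^sub>R X k) + t k *\<^sub>R q)$i \<le> t k * K"
    "max ((t k *\<^sub>R X k)$i) 0 * max ((M *v (t k *\<^sub>R X k) + t k *\<^sub>R q)$i) 0 \<le> (t k)\<^sup>2 * K" for k
    using fr_le_imp_scaled_bounds[OF r fX(1) t_nonneg, folded K_def] by blast+
  have u: "(\<lambda>k. t k *\<^sub>R X k) \<longlonglongrightarrow> d"
    using d by (simp add: t_def)
  have y: "(\<lambda>k. M *v (t k *\<^sub>R X k) + t k *\<^sub>R q) \<longlonglongrightarrow> M *v d"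
    using tendsto_add[OF bounded_linear.tendsto[OF matrix_vector_mul_bounded_linear u]
        tendsto_scaleR[OF t tendsto_const]] by simp
  have tK: "(\<lambda>k. t k * K) \<longlonglongrightarrow> 0" and t2K: "(\<lambda>k. (t k)\<^sup>2 * K) \<longlonglongrightarrow> 0"
    using t by (auto intro!: tendsto_eq_intros)
  have "- d$i \<le> 0"
    using scaled(1)
    by (intro tendsto_le[OF trivial_limit_sequentially tK tendsto_minus[OF tendsto_vec_nth[OF u]]]
        always_eventually) auto
  moreover have "- (M *v d)$i \<le> 0"
    using scaled(2)
    by (intro tendsto_le[OF trivial_limit_sequentially tK tendsto_minus[OF tendsto_vec_nth[OF y]]]
        always_eventually) auto
  moreover have "max (d$i) 0 * max ((M *v d)$i) 0 \<le> 0"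
    using scaled(3)
    by (intro tendsto_le[OF trivial_limit_sequentially t2K tendsto_mult[OF
          tendsto_max[OF tendsto_vec_nth[OF u] tendsto_const]
          tendsto_max[OF tendsto_vec_nth[OF y] tendsto_const]]] always_eventually) auto
  ultimately have "d$i * (M *v d)$i \<le> 0" "0 \<le> d$i * (M *v d)$i"
    by (simp_all add: max_absorb1)
  then show "d$i * (M *v d)$i = 0"
    by linarith
  obtain k where "l0 d \<le> l0 (X k /\<^sub>R norm (X k))"
    using eventually_l0_le[OF d] by (auto simp: eventually_sequentially)
  also have "\<dots> \<le> l0 (X k)"
    unfolding l0_def by (intro card_mono) auto
  finally show "l0 d \<le> s"
    using fX(2) order_trans by blast
qed

lemma bounded_level_set_fr:
  fixes M :: "real^'n^'n"
  assumes P: "P_s_matrix s M" and r: "r > 0"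
  shows "bounded (level_set s (fr r M q) c)"
proof (rule ccontr)
  assume "\<not> ?thesis"
  then have "\<forall>k. \<exists>x. x \<in> level_set s (fr r M q) c \<and> real k < norm x"
    by (auto simp: bounded_iff not_le)
  then obtain X where "\<forall>k. X k \<in> level_set s (fr r M q) c \<and> real k < norm (X k)"
    by (rule choice[THEN exE])
  then have X: "\<And>k. X k \<in> level_set s (fr r M q) c" and X_large: "\<And>k. real k < norm (X k)"
    by auto
  have X_inf: "filterlim (\<lambda>k. norm (X k)) at_top sequentially"
    using X_large
    by (intro filterlim_at_top_mono[OF filterlim_real_sequentially] always_eventually allI less_imp_le)
  have "norm (X k) > 0" for k
    using X_large[of k] of_nat_0_le_iff[of k] by linarith
  then have "X k /\<^sub>R norm (X k) \<in> sphere 0 1" for k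
    by simp
  then obtain d \<sigma> where d: "d \<in> sphere 0 1" and \<sigma>: "strict_mono \<sigma>"
    and lim: "((\<lambda>k. X k /\<^sub>R norm (X k)) \<circ> \<sigma>) \<longlonglongrightarrow> d"
    using seq_compactE[OF compact_imp_seq_compact[OF compact_sphere],
        of "\<lambda>k. X k /\<^sub>R norm (X k)" 0 1] by blast
  have "filterlim (\<lambda>k. norm (X (\<sigma> k))) at_top sequentially"
    using filterlim_compose[OF X_inf filterlim_subseq[OF \<sigma>]] by (simp add: o_def)
  from level_set_recession_direction[OF r X this] lim
  have "l0 d \<le> s" "d$i * (M *v d)$i = 0" for i
    by (simp_all add: o_def)
  then have "d = 0"
    using P_s_matrix_complementary_eq_0[OF P] by blast
  with d show False
    by simp
qed

definition fr_deriv :: "real \<Rightarrow> real^'n^'n \<Rightarrow> real^'n \<Rightarrow> real^'n \<Rightarrow> real^'n \<Rightarrow> real" where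
  "fr_deriv r M q x h = (\<Sum>i\<in>UNIV.
        pos_powr r (x$i) * pos_powr (r - 1) ((M *v x + q)$i) * (M *v h)$i
      + pos_powr (r - 1) (x$i) * pos_powr r ((M *v x + q)$i) * h$i
      - pos_powr (r - 1) (- x$i) * h$i
      - pos_powr (r - 1) (- (M *v x + q)$i) * (M *v h)$i)"

lemma fr_has_derivative:
  fixes M :: "real^'n^'n"
  assumes r: "r > 1"
  shows "(fr r M q has_derivative fr_deriv r M q x) (at x)"
proof -
  have nth: "((\<lambda>x. x$i) has_derivative (\<lambda>h. h$i)) (at x)" for i :: 'n
    by (rule bounded_linear.has_derivative[OF bounded_linear_vec_nth has_derivative_ident])
  have affine_nth: "((\<lambda>x. (M *v x + q)$i) has_derivative (\<lambda>h. (M *v h)$i)) (at x)" for i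
    by (rule bounded_linear.has_derivative[OF bounded_linear_vec_nth])
      (auto intro!: derivative_eq_intros
        bounded_linear.has_derivative[OF matrix_vector_mul_bounded_linear])
  note chain = DERIV_compose_FDERIV[OF has_real_derivative_pos_powr[OF r]]
  have "((\<lambda>x. (1 / r) * ((\<Sum>i\<in>UNIV. pos_powr r (x$i) * pos_powr r ((M *v x + q)$i))
      + (\<Sum>i\<in>UNIV. pos_powr r (- x$i)) + (\<Sum>i\<in>UNIV. pos_powr r (- (M *v x + q)$i))))
      has_derivative fr_deriv r M q x) (at x)"
    by (rule has_derivative_eq_rhs, (rule has_derivative_mult_right has_derivative_add
        has_derivative_sum has_derivative_mult has_derivative_minus chain nth affine_nth)+)
      (use r in \<open>simp add: fun_eq_iff fr_deriv_def sum_distrib_left sum.distrib sum_subtractf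
          sum_negf algebra_simps\<close>)
  then show ?thesis
    by (simp only: fr_eq_pos_powr[abs_def])
qed

lemma grad_fr:
  fixes M :: "real^'n^'n"
  assumes "r > 1"
  shows "grad (fr r M q) x = (\<chi> j. fr_deriv r M q x (axis j 1))"
  unfolding grad_def frechet_derivative_at[OF fr_has_derivative[OF assms]] ..

lemma lipschitz_grad_fr:
  fixes M :: "real^'n^'n"
  assumes r: "r \<ge> 2" and S: "compact S"
  shows "lipschitz S (grad (fr r M q))"
proof (rule lipschitz_componentwise)
  fix j
  have nth: "lipschitz S (\<lambda>x. x$i)" for i
    using lipschitz_bounded_linear[OF bounded_linear_vec_nth, where c=0] by simp
  have "lipschitz S (\<lambda>x. (M *v x)$i + q$i)" for i
    by (intro lipschitz_bounded_linear bounded_linear_compose[OF bounded_linear_vec_nth]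
        matrix_vector_mul_bounded_linear)
  then have affine: "lipschitz S (\<lambda>x. (M *v x + q)$i)" for i
    by simp
  have "lipschitz S (\<lambda>x. fr_deriv r M q x (axis j 1))"
    unfolding fr_deriv_def using r
    by (intro lipschitz_sum lipschitz_add lipschitz_diff lipschitz_minus lipschitz_mult[OF S]
        lipschitz_pos_powr[OF S] lipschitz_const nth affine) auto
  then show "lipschitz S (\<lambda>x. grad (fr r M q) x $ j)"
    using r by (simp add: grad_fr)
qed

lemma hess_set_fr_subset:
  fixes M :: "real^'n^'n"
  assumes e: "0 < e" and lip: "L-lipschitz_on (ball x e) (grad (fr r M q))"
  shows "hess_set r M q x \<subseteq> insert (matrix (SOME f'. False)) (opnorm_cball L)"
proof (cases "r = 2")
  case True
  then show ?thesis
    using clarke_jacobian_subset_opnorm_cball[OF e lip] by (auto simp: hess_set_def)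
next
  case False
  then have "hess_set r M q x = {jacobian (grad (fr r M q)) x}"
    by (simp add: hess_set_def hessian_def)
  then show ?thesis
    using jacobian_in_opnorm_cball[OF _ e lip] jacobian_if_not_differentiable
    by (cases "grad (fr r M q) differentiable (at x)") auto
qed

theorem lemma5p1:
  fixes M :: "real^'n^'n" and q :: "real^'n" and r :: real and s :: nat
  assumes "P_s_matrix s M" and "r \<ge> 2"
  shows "bdd_above {sigma_max H | x H.
           x \<in> level_set s (fr r M q) (fr r M q 0) \<and> H \<in> hess_set r M q x}"
proof -
  have "bounded (level_set s (fr r M q) (fr r M q 0))"
    using assms by (intro bounded_level_set_fr) auto
  then obtain R where R: "level_set s (fr r M q) (fr r M q 0) \<subseteq> ball 0 R"
    using bounded_subset_ballD by blast
  obtain L where L: "L-lipschitz_on (cball 0 (R + 1)) (grad (fr r M q))"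
    using lipschitz_grad_fr[OF assms(2) compact_cball] unfolding lipschitz_def by blast
  define U where "U = max (max L (Sup {})) (sigma_max (matrix (SOME f'. False) :: real^'n^'n))"
  have "sigma_max H \<le> U" if x: "x \<in> level_set s (fr r M q) (fr r M q 0)"
    and H: "H \<in> hess_set r M q x" for x H
  proof -
    have "x \<in> ball 0 R"
      using R x by blast
    then have "ball x 1 \<subseteq> cball 0 (R + 1)"
      by (simp add: ball_subset_cball_iff dist_commute)
    then have "H \<in> insert (matrix (SOME f'. False)) (opnorm_cball L)"
      using hess_set_fr_subset[OF zero_less_one lipschitz_on_subset[OF L]] H by blast
    then show ?thesis
      using sigma_max_le_if_in_opnorm_cball[OF _ lipschitz_on_nonneg[OF L]]
      by (auto simp: U_def intro: max.coboundedI1)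
  qed
  then show ?thesis
    by (intro bdd_aboveI[where M=U]) blast
qed

end
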